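(* Let $1\le k<n$, let $x_1,\dots,x_k<0$ and $x_{k+1},\dots,x_n\ge0$ be real numbers, and $P_n(z)=(z-x_1)\cdots(z-x_n)$. Then $$d_1\big(Z(P_n),Z(P_n')\cup\{0\}\big)\le\frac1k\sum_{i=1}^k|x_i|+\frac1{n-k}\sum_{i=k+1}^n|x_i|.$$
   Context: For a polynomial $P$, $Z(P)$ is the multiset of its zeros (with multiplicity); $Z(P_n')\cup\{0\}$ denotes the multiset of the $n-1$ critical points of $P_n$ together with one additional point $0$. For multisets $U=\{u_1,\dots,u_n\}$, $V=\{v_1,\dots,v_n\}$, $d_1(U,V)=\min_{\pi\in\mathfrak{S}_n}\sum_{i=1}^n|u_i-v_{\pi(i)}|$. *)

theory Defs
  imports "HOL-Analysis.Analysis" "HOL-Computational_Algebra.Polynomial" "HOL-Combinatorics.Permutations"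
begin

definition d1 :: "complex multiset \<Rightarrow> complex multiset \<Rightarrow> real" where
  "d1 U V = (let us = (SOME l. mset l = U); vs = (SOME l. mset l = V) in
     Min ((\<lambda>\<pi>. \<Sum>i<size U. cmod (us ! i - vs ! (\<pi> i))) ` {\<pi>. \<pi> permutes {..<size U}}))"

definition Pn :: "nat \<Rightarrow> (nat \<Rightarrow> real) \<Rightarrow> complex poly" where
  "Pn n x = (\<Prod>i=1..n. [:- complex_of_real (x i), 1:])"

end

theory Submission
  imports Defs "HOL-Computational_Algebra.Fundamental_Theorem_Algebra"
begin

text \<open>
  Let r_0 < ... < r_m be the distinct roots of P. By Rolle every gap (r_j, r_(j+1)) contains a
  critical point c_j; together with each root of multiplicity \<mu>, taken \<mu> - 1 times, these are
  all the critical points. Pairing every c_j with the endpoint of its gap on the same side of 0,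
  every multiple root with itself and the one remaining root with the extra point 0 gives
  d_1 \<le> \<Sum>|r_j| - \<Sum>|c_j|.

  Write P = Q R with Q collecting the negative and R the nonnegative roots. On a gap of Q the
  logarithmic derivative P'/P = Q'/Q + R'/R is decreasing and R'/R < 0, so the critical point of P
  there lies left of that of Q and has larger modulus; symmetrically for R. Hence \<Sum>|c_j|
  dominates the corresponding sums for Q and R. For a polynomial whose roots have one sign the
  critical points have that sign too and, by Vieta, the same mean as the roots, so that
  \<Sum>|r_j| - \<Sum>|c_j| is the mean of the |x_i|.
\<close>

section \<open>Polynomials with prescribed roots\<close>

definition root_poly :: "'i set \<Rightarrow> ('i \<Rightarrow> 'a::comm_ring_1) \<Rightarrow> 'a poly" where
  "root_poly I x = (\<Prod>i\<in>I. [:- x i, 1:])"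

lemma Pn_eq_root_poly: "Pn n x = root_poly {1..n} (\<lambda>i. complex_of_real (x i))"
  by (simp add: Pn_def root_poly_def)

lemma root_poly_nonzero: "root_poly I (x :: 'i \<Rightarrow> 'a::idom) \<noteq> 0"
  by (cases "finite I") (simp_all add: root_poly_def)

lemma lead_coeff_root_poly: "lead_coeff (root_poly I (x :: 'i \<Rightarrow> 'a::idom)) = 1"
  by (simp add: root_poly_def lead_coeff_prod)

lemma degree_root_poly: "degree (root_poly I (x :: 'i \<Rightarrow> 'a::idom)) = card I"
  by (cases "finite I") (simp_all add: root_poly_def degree_prod_sum_eq)

lemma proots_root_poly:
  fixes x :: "'i \<Rightarrow> 'a::idom"
  assumes "finite I"
  shows "proots (root_poly I x) = image_mset x (mset_set I)"
proof -
  have "proots (root_poly I x) = (\<Sum>i\<in>I. {#x i#})"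
    unfolding root_poly_def by (subst proots_prod) (auto simp del: minus_pCons)
  also have "\<dots> = image_mset x (mset_set I)"
    using assms by (induction I rule: finite_induct) auto
  finally show ?thesis .
qed

lemma poly_root_poly: "poly (root_poly I x) t = (\<Prod>i\<in>I. t - x i)"
  by (simp add: root_poly_def poly_prod)

lemma poly_root_poly_nonzero:
  assumes "finite I" "t \<notin> x ` I"
  shows "poly (root_poly I (x :: 'i \<Rightarrow> 'a::idom)) t \<noteq> 0"
  using assms by (auto simp: poly_root_poly)

lemma poly_pderiv_root_poly: "poly (pderiv (root_poly I x)) t = (\<Sum>i\<in>I. \<Prod>j\<in>I - {i}. t - x j)"
  by (simp add: root_poly_def pderiv_prod poly_sum poly_prod pderiv_pCons)

lemma poly_pderiv_root_poly_of_real: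
  "poly (pderiv (root_poly I (\<lambda>i. complex_of_real (x i)))) (of_real t)
   = of_real (poly (pderiv (root_poly I x)) t)"
  by (simp add: poly_pderiv_root_poly)

lemma order_pderiv_root_poly:
  fixes x :: "'i \<Rightarrow> 'a::{idom, semiring_char_0}"
  assumes "finite I" "u \<in> x ` I"
  shows "order u (pderiv (root_poly I x)) = card {i\<in>I. x i = u} - 1"
proof -
  have "order u (root_poly I x) = count (proots (root_poly I x)) u"
    by (simp add: root_poly_nonzero)
  also have "\<dots> = card {i\<in>I. x i = u}"
    using assms(1) by (simp add: proots_root_poly count_image_mset_eq_card_vimage)
  moreover have "poly (root_poly I x) u = 0"
    using assms by (auto simp: poly_root_poly)
  ultimately show ?thesis
    using order_pderiv[of "root_poly I x" u] root_poly_nonzero[of I x] by simp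
qed

lemma rolle_root_poly:
  fixes x :: "'i \<Rightarrow> real"
  assumes "finite I" "a \<in> x ` I" "b \<in> x ` I" "a < b"
  obtains t where "a < t" "t < b" "poly (pderiv (root_poly I x)) t = 0"
proof -
  have "poly (root_poly I x) u = 0" if "u \<in> x ` I" for u
    using that assms(1) by (auto simp: poly_root_poly)
  with poly_MVT[OF assms(4), of "root_poly I x"] assms(2,3) that show ?thesis by auto
qed

section \<open>The logarithmic derivative\<close>

definition log_deriv :: "'i set \<Rightarrow> ('i \<Rightarrow> real) \<Rightarrow> real \<Rightarrow> real" where
  "log_deriv I x t = (\<Sum>i\<in>I. 1 / (t - x i))"

lemma poly_pderiv_root_poly_eq_log_deriv:
  assumes "finite I" "t \<notin> x ` I"
  shows "poly (pderiv (root_poly I x)) t = poly (root_poly I x) t * log_deriv I x t"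
proof -
  have "(\<Prod>j\<in>I - {i}. t - x j) = (\<Prod>j\<in>I. t - x j) * (1 / (t - x i))" if "i \<in> I" for i
  proof -
    have "(\<Prod>j\<in>I. t - x j) = (t - x i) * (\<Prod>j\<in>I - {i}. t - x j)"
      using prod.remove[OF assms(1) that] by simp
    moreover have "t - x i \<noteq> 0" using assms that by auto
    ultimately show ?thesis by simp
  qed
  then show ?thesis
    by (simp add: poly_pderiv_root_poly poly_root_poly log_deriv_def sum_distrib_left)
qed

lemma poly_pderiv_root_poly_eq_0_iff:
  assumes "finite I" "t \<notin> x ` I"
  shows "poly (pderiv (root_poly I x)) t = 0 \<longleftrightarrow> log_deriv I x t = 0"
  using poly_pderiv_root_poly_eq_log_deriv[OF assms] poly_root_poly_nonzero[OF assms] by simp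

lemma log_deriv_union:
  "finite A \<Longrightarrow> finite B \<Longrightarrow> A \<inter> B = {} \<Longrightarrow> log_deriv (A \<union> B) x t = log_deriv A x t + log_deriv B x t"
  unfolding log_deriv_def by (rule sum.union_disjoint)

lemma log_deriv_neg: "finite I \<Longrightarrow> I \<noteq> {} \<Longrightarrow> \<forall>i\<in>I. t < x i \<Longrightarrow> log_deriv I x t < 0"
  unfolding log_deriv_def using sum_strict_mono[of I "\<lambda>i. 1 / (t - x i)" "\<lambda>_. 0"]
  by (auto simp: divide_neg_pos)

lemma log_deriv_pos: "finite I \<Longrightarrow> I \<noteq> {} \<Longrightarrow> \<forall>i\<in>I. x i < t \<Longrightarrow> 0 < log_deriv I x t"
  unfolding log_deriv_def using sum_strict_mono[of I "\<lambda>_. 0" "\<lambda>i. 1 / (t - x i)"] by auto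

lemma log_deriv_strict_antimono:
  assumes "finite I" "I \<noteq> {}" "t1 < t2" "\<forall>i\<in>I. x i \<notin> {t1..t2}"
  shows "log_deriv I x t2 < log_deriv I x t1"
  unfolding log_deriv_def
proof (rule sum_strict_mono)
  fix i assume "i \<in> I"
  then have "x i < t1 \<or> t2 < x i" using assms(4) by force
  then show "1 / (t2 - x i) < 1 / (t1 - x i)" using assms(3) by (auto simp: divide_simps)
qed (use assms in auto)

lemma log_deriv_less_iff:
  assumes "finite I" "I \<noteq> {}" "\<forall>i\<in>I. x i \<notin> {a<..<b}" "c \<in> {a<..<b}" "d \<in> {a<..<b}"
  shows "log_deriv I x d < log_deriv I x c \<longleftrightarrow> c < d"
proof -
  have "log_deriv I x v < log_deriv I x u" if "u < v" "u \<in> {a<..<b}" "v \<in> {a<..<b}" for u v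
    using that assms(3) by (intro log_deriv_strict_antimono[OF assms(1,2)]) fastforce+
  then show ?thesis using assms(4,5) by (metis less_asym linorder_neq_iff)
qed

(* The roots in K give log_deriv K a fixed sign at d, and log_deriv (J \<union> K) is
   decreasing on the root-free gap (a, b). *)
lemma critical_point_shift_left:
  fixes x :: "'i \<Rightarrow> real"
  assumes "finite J" "finite K" "K \<noteq> {}" "J \<inter> K = {}" "\<forall>i\<in>J \<union> K. x i \<notin> {a<..<b}"
    and "c \<in> {a<..<b}" "d \<in> {a<..<b}" "log_deriv (J \<union> K) x c = 0" "log_deriv J x d = 0"
    and "\<forall>i\<in>K. b \<le> x i"
  shows "c < d"
proof -
  have "log_deriv K x d < 0" using assms(2,3,7,10) by (intro log_deriv_neg) auto
  then have "log_deriv (J \<union> K) x d < log_deriv (J \<union> K) x c"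
    using assms(8,9) log_deriv_union[OF assms(1,2,4)] by simp
  then show ?thesis using log_deriv_less_iff assms by blast
qed

lemma critical_point_shift_right:
  fixes x :: "'i \<Rightarrow> real"
  assumes "finite J" "finite K" "K \<noteq> {}" "J \<inter> K = {}" "\<forall>i\<in>J \<union> K. x i \<notin> {a<..<b}"
    and "c \<in> {a<..<b}" "d \<in> {a<..<b}" "log_deriv (J \<union> K) x c = 0" "log_deriv J x d = 0"
    and "\<forall>i\<in>K. x i \<le> a"
  shows "d < c"
proof -
  have "0 < log_deriv K x d" using assms(2,3,7,10) by (intro log_deriv_pos) auto
  then have "log_deriv (J \<union> K) x c < log_deriv (J \<union> K) x d"
    using assms(8,9) log_deriv_union[OF assms(1,2,4)] by simp
  then show ?thesis using log_deriv_less_iff assms by blast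
qed

section \<open>Interlacing lists\<close>

inductive interlaced :: "'a::linorder list \<Rightarrow> 'a list \<Rightarrow> bool" where
  interlaced_single: "interlaced [a] []"
| interlaced_Cons: "a < c \<Longrightarrow> c < b \<Longrightarrow> interlaced (b # rs) cs \<Longrightarrow> interlaced (a # b # rs) (c # cs)"

lemma interlaced_sorted: "interlaced rs cs \<Longrightarrow> sorted_wrt (<) rs"
  by (induction rule: interlaced.induct) (auto intro: less_trans)

lemma interlaced_bounds:
  "interlaced rs cs \<Longrightarrow> c \<in> set cs \<Longrightarrow> (\<exists>a\<in>set rs. a < c) \<and> (\<exists>b\<in>set rs. c < b)"
  by (induction rule: interlaced.induct) auto

lemma interlaced_hd_less:
  assumes "interlaced (b # rs) cs" "u \<in> set rs \<union> set cs"
  shows "b < u"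
proof -
  have "b < v" if "v \<in> set rs" for v
    using interlaced_sorted[OF assms(1)] that by simp
  moreover have "b < u" if "u \<in> set cs"
    using interlaced_bounds[OF assms(1) that] \<open>\<And>v. v \<in> set rs \<Longrightarrow> b < v\<close>
    by (auto intro: less_trans)
  ultimately show ?thesis using assms(2) by blast
qed

lemma interlaced_disjoint: "interlaced rs cs \<Longrightarrow> set rs \<inter> set cs = {}"
proof (induction rule: interlaced.induct)
  case (interlaced_Cons a c b rs cs)
  then show ?case using interlaced_hd_less[OF interlaced_Cons.hyps(3)] by (fastforce dest: less_trans)
qed simp

lemma interlaced_distinct: "interlaced rs cs \<Longrightarrow> distinct cs"
  by (induction rule: interlaced.induct) (auto dest: interlaced_hd_less)

lemma interlaced_Cons_less: "interlaced (b # rs) cs \<Longrightarrow> a < b \<Longrightarrow> interlaced (a # rs) cs"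
  by (cases rule: interlaced.cases) (auto intro: interlaced.intros)

lemma interlaced_nth:
  assumes "rs \<noteq> []" "\<And>j. Suc j < length rs \<Longrightarrow> rs ! j < s j \<and> s j < rs ! Suc j"
  shows "interlaced rs (map s [0..<length rs - 1])"
  using assms
proof (induction rs arbitrary: s)
  case (Cons a rs)
  show ?case
  proof (cases rs)
    case Nil
    then show ?thesis by (simp add: interlaced_single)
  next
    case (Cons b rs')
    have "interlaced rs (map (s \<circ> Suc) [0..<length rs - 1])"
      using Cons.prems(2)[of "Suc _"] Cons.IH[of "s \<circ> Suc"] \<open>rs = b # rs'\<close> by (simp add: comp_def)
    then show ?thesis
      using Cons.prems(2)[of 0] \<open>rs = b # rs'\<close>
      by (simp add: map_upt_Suc interlaced_Cons comp_def del: upt_Suc)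
  qed
qed simp

lemma interlaced_append:
  assumes "interlaced (xs @ ys) cs" "xs \<noteq> []" "ys \<noteq> []"
  obtains cs1 c cs2 where "cs = cs1 @ c # cs2" "interlaced xs cs1" "interlaced ys cs2"
proof -
  have "\<exists>cs1 c cs2. cs = cs1 @ c # cs2 \<and> interlaced xs cs1 \<and> interlaced ys cs2"
    using assms
  proof (induction xs arbitrary: cs)
    case (Cons a xs)
    show ?case
    proof (cases xs)
      case Nil
      from Cons.prems \<open>xs = []\<close> obtain c cs' where "cs = c # cs'" "interlaced ys cs'"
        by (cases ys) (auto elim: interlaced.cases)
      then show ?thesis using \<open>xs = []\<close>
        by (intro exI[of _ "[]"] exI[of _ c] exI[of _ cs']) (simp add: interlaced_single)
    next
      case (Cons a' xs')
      from \<open>interlaced ((a # xs) @ ys) cs\<close> \<open>xs = a' # xs'\<close> obtain c cs' where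
        cs: "cs = c # cs'" "a < c" "c < a'" "interlaced (xs @ ys) cs'"
        by (auto elim: interlaced.cases)
      from Cons.IH[OF cs(4)] Cons.prems(3) obtain cs1 c' cs2 where
        "cs' = cs1 @ c' # cs2" "interlaced xs cs1" "interlaced ys cs2"
        by (auto simp: \<open>xs = a' # xs'\<close>)
      with cs \<open>xs = a' # xs'\<close> show ?thesis
        by (intro exI[of _ "c # cs1"] exI[of _ c'] exI[of _ cs2]) (auto intro: interlaced_Cons)
    qed
  qed simp
  with that show ?thesis by blast
qed

lemma interlaced_list_all2:
  assumes "interlaced rs cs" "interlaced rs ds"
    and "\<And>a b c d. a \<in> set rs \<Longrightarrow> b \<in> set rs \<Longrightarrow> set rs \<inter> {a<..<b} = {} \<Longrightarrow>
           c \<in> set cs \<Longrightarrow> d \<in> set ds \<Longrightarrow> a < c \<Longrightarrow> c < b \<Longrightarrow> a < d \<Longrightarrow> d < b \<Longrightarrow> R c d"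
  shows "list_all2 R cs ds"
  using assms
proof (induction arbitrary: ds rule: interlaced.induct)
  case (interlaced_single a)
  then show ?case by (auto elim: interlaced.cases)
next
  case (interlaced_Cons a c b rs cs)
  from interlaced_Cons.prems(1) obtain d ds' where
    ds: "ds = d # ds'" "a < d" "d < b" "interlaced (b # rs) ds'"
    by (auto elim: interlaced.cases)
  have above_b: "b < u" if "u \<in> set rs" for u
    using interlaced_hd_less[OF interlaced_Cons.hyps(3)] that by simp
  have "R c d"
    using interlaced_Cons.prems(2)[of a b c d] interlaced_Cons.hyps ds above_b by fastforce
  moreover have "list_all2 R cs ds'"
  proof (rule interlaced_Cons.IH[OF ds(4)])
    fix a' b' c' d'
    assume a'b': "a' \<in> set (b # rs)" "b' \<in> set (b # rs)" "set (b # rs) \<inter> {a'<..<b'} = {}"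
      and c'd': "c' \<in> set cs" "d' \<in> set ds'" "a' < c'" "c' < b'" "a' < d'" "d' < b'"
    have "a < a'" using a'b'(1) above_b interlaced_Cons.hyps(1,2) by (auto intro: less_trans)
    then have "set (a # b # rs) \<inter> {a'<..<b'} = {}" using a'b'(3) by auto
    moreover have "a' \<in> set (a # b # rs)" "b' \<in> set (a # b # rs)" using a'b'(1,2) by auto
    ultimately show "R c' d'" using interlaced_Cons.prems(2) c'd' ds(1) by (meson list.set_intros(2))
  qed
  ultimately show ?case using ds(1) by simp
qed

lemma sorted_list_of_set_Un_less:
  fixes A B :: "'a::linorder set"
  assumes "finite A" "finite B" "\<forall>a\<in>A. \<forall>b\<in>B. a < b"
  shows "sorted_list_of_set (A \<union> B) = sorted_list_of_set A @ sorted_list_of_set B"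
proof -
  have "A \<inter> B = {}" using assms(3) by fastforce
  then show ?thesis
    using assms by (subst sorted_list_of_set_unique[symmetric]) (auto simp: sorted_wrt_append card_Un_disjoint)
qed

section \<open>The sum of the critical points\<close>

lemma prod_mset_linear_factors:
  fixes M :: "'a::idom multiset"
  shows "degree (\<Prod>a\<in>#M. [:-a, 1:]) = size M \<and> lead_coeff (\<Prod>a\<in>#M. [:-a, 1:]) = 1"
proof (induction M)
  case (add a M)
  define q where "q = (\<Prod>a\<in>#M. [:-a, 1:])"
  have "q \<noteq> 0" "degree q = size M" "lead_coeff q = 1" using add by (auto simp: q_def)
  moreover have "lead_coeff ([:-a, 1:] * q) = 1"
    by (subst lead_coeff_mult) (simp add: \<open>lead_coeff q = 1\<close>)
  ultimately show ?case by (simp add: q_def degree_mult_eq del: mult_pCons_left)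
qed simp

lemma coeff_prod_mset_linear_factors:
  fixes M :: "'a::idom multiset"
  assumes "size M = Suc d"
  shows "coeff (\<Prod>a\<in>#M. [:-a, 1:]) d = - sum_mset M"
  using assms
proof (induction M arbitrary: d)
  case (add a M)
  define q where "q = (\<Prod>a\<in>#M. [:-a, 1:])"
  have "coeff (\<Prod>a\<in>#add_mset a M. [:-a, 1:]) d = coeff (pCons 0 q) d - a * coeff q d"
    by (simp add: q_def mult_pCons_left)
  also have "\<dots> = - sum_mset (add_mset a M)"
  proof (cases "M = {#}")
    case False
    then obtain d' where d': "d = Suc d'" "size M = Suc d'"
      using add.prems by (cases "size M") auto
    then have "coeff q d = 1" using prod_mset_linear_factors[of M] unfolding q_def by metis
    then show ?thesis using add.IH[OF d'(2)] d' by (simp add: q_def)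
  qed (use add.prems in \<open>simp add: q_def\<close>)
  finally show ?case .
qed simp

lemma sum_proots_complex:
  fixes p :: "complex poly"
  assumes "degree p \<ge> 1"
  shows "sum_mset (proots p) = - coeff p (degree p - 1) / lead_coeff p"
proof -
  have "size (proots p) = Suc (degree p - 1)" using assms by (simp add: size_proots_complex)
  then have "coeff p (degree p - 1) = lead_coeff p * - sum_mset (proots p)"
    using coeff_prod_mset_linear_factors complex_poly_decompose_multiset[of p] by (metis coeff_smult)
  moreover have "lead_coeff p \<noteq> 0" using assms by auto
  ultimately show ?thesis by (simp add: field_simps)
qed

lemma coeff_root_poly:
  fixes x :: "'i \<Rightarrow> 'a::idom"
  assumes "finite I" "I \<noteq> {}"
  shows "coeff (root_poly I x) (card I - 1) = - (\<Sum>i\<in>I. x i)"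
proof -
  have "root_poly I x = (\<Prod>a\<in>#image_mset x (mset_set I). [:-a, 1:])"
    by (simp add: root_poly_def prod_unfold_prod_mset image_mset.compositionality comp_def)
  moreover have "size (image_mset x (mset_set I)) = Suc (card I - 1)"
    using assms by (simp add: card_gt_0_iff)
  ultimately show ?thesis by (simp add: coeff_prod_mset_linear_factors sum_unfold_sum_mset)
qed

lemma sum_critical_points_root_poly:
  fixes x :: "'i \<Rightarrow> complex"
  assumes "finite I" "I \<noteq> {}"
  shows "sum_mset (proots (pderiv (root_poly I x)))
         = (of_nat (card I) - 1) / of_nat (card I) * (\<Sum>i\<in>I. x i)"
proof (cases "card I = 1")
  case True
  then have "proots (pderiv (root_poly I x)) = {#}"
    using size_proots_complex[of "pderiv (root_poly I x)"] by (simp add: degree_pderiv degree_root_poly)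
  with True show ?thesis by simp
next
  case False
  define d where "d = card I"
  have "card I > 0" using assms by (simp add: card_gt_0_iff)
  with False have d: "d \<ge> 2" by (simp add: d_def)
  have "degree (pderiv (root_poly I x)) = Suc (d - 2)"
    using d by (simp add: degree_pderiv degree_root_poly d_def)
  moreover have "coeff (pderiv (root_poly I x)) (d - 2) = of_nat (d - 1) * - (\<Sum>i\<in>I. x i)"
    using d coeff_root_poly[OF assms, of x] by (simp add: coeff_pderiv d_def Suc_diff_Suc numeral_2_eq_2)
  moreover have "lead_coeff (pderiv (root_poly I x)) = of_nat d"
    using d lead_coeff_root_poly[of I x]
    by (simp add: coeff_pderiv degree_pderiv degree_root_poly d_def)
  ultimately show ?thesis
    using sum_proots_complex[of "pderiv (root_poly I x)"] d by (simp add: d_def of_nat_diff)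
qed

lemma sum_critical_points_of_real:
  fixes x :: "'i \<Rightarrow> real"
  assumes "finite I" "I \<noteq> {}"
    and "proots (pderiv (root_poly I (\<lambda>i. complex_of_real (x i)))) = image_mset of_real C"
  shows "sum_mset C = (real (card I) - 1) / card I * (\<Sum>i\<in>I. x i)"
proof -
  have "complex_of_real (sum_mset C) = sum_mset (image_mset of_real C)"
    by (induction C) simp_all
  also have "\<dots> = complex_of_real ((real (card I) - 1) / card I * (\<Sum>i\<in>I. x i))"
    using sum_critical_points_root_poly[OF assms(1,2), of "\<lambda>i. complex_of_real (x i)"] assms(3) by simp
  finally show ?thesis by (simp only: of_real_eq_iff)
qed

section \<open>The critical points of a real-rooted polynomial\<close>

lemma count_image_mset_inj: "inj f \<Longrightarrow> count (image_mset f M) (f u) = count M u"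
  by (induction M) (auto dest: injD)

lemma image_mset_of_real_subseteq_proots:
  fixes p :: "complex poly"
  assumes "p \<noteq> 0" "\<And>u. count D u \<le> order (of_real u) p"
  shows "image_mset of_real D \<subseteq># proots p"
proof (rule mset_subset_eqI)
  fix w :: complex
  show "count (image_mset of_real D) w \<le> count (proots p) w"
  proof (cases "w \<in># image_mset of_real D")
    case True
    then obtain u where "w = of_real u" by auto
    then show ?thesis using assms by (simp add: count_image_mset_inj inj_of_real)
  next
    case False
    then show ?thesis by (simp only: not_in_iff)
  qed
qed

(* A root of multiplicity \<mu> is a critical point of multiplicity \<mu> - 1 and each point
   of cs is one more; counting shows that there are no other critical points. *)
lemma proots_pderiv_root_poly:
  fixes x :: "'i \<Rightarrow> real"
  assumes fin: "finite I" and ne: "I \<noteq> {}" and cs: "distinct cs" "set cs \<inter> x ` I = {}"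
    "length cs = card (x ` I) - 1" "\<forall>c\<in>set cs. poly (pderiv (root_poly I x)) c = 0"
  shows "proots (pderiv (root_poly I (\<lambda>i. complex_of_real (x i))))
         = image_mset of_real (image_mset x (mset_set I) - mset_set (x ` I) + mset cs)"
proof -
  define F where "F = root_poly I (\<lambda>i. complex_of_real (x i))"
  define Z where "Z = image_mset x (mset_set I)"
  define D where "D = Z - mset_set (x ` I) + mset cs"
  have "pderiv F \<noteq> 0"
    using fin ne by (simp add: F_def pderiv_eq_0_iff degree_root_poly card_gt_0_iff)
  have order_D: "count D u \<le> order (of_real u) (pderiv F)" for u
  proof (cases "u \<in> x ` I")
    case True
    then have "order (of_real u) (pderiv F) = card {i\<in>I. x i = u} - 1"
      using order_pderiv_root_poly[OF fin, of "of_real u" "\<lambda>i. complex_of_real (x i)"] by (force simp: F_def)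
    moreover have "count D u = card {i\<in>I. x i = u} - 1"
      using True cs(2) fin by (auto simp: D_def Z_def count_image_mset_eq_card_vimage)
    ultimately show ?thesis by simp
  next
    case False
    then have "count D u = count (mset cs) u"
      by (auto simp: D_def Z_def fin count_image_mset_eq_card_vimage)
    moreover have "order (of_real u) (pderiv F) \<noteq> 0" if "u \<in> set cs"
    proof -
      have "poly (pderiv F) (of_real u) = 0"
        using cs(4) that by (simp add: F_def poly_pderiv_root_poly_of_real)
      then show ?thesis using \<open>pderiv F \<noteq> 0\<close> order_root by blast
    qed
    ultimately show ?thesis using cs(1) by (cases "u \<in> set cs") (simp_all add: distinct_count_atmost_1)
  qed
  have "image_mset of_real D \<subseteq># proots (pderiv F)"
    using \<open>pderiv F \<noteq> 0\<close> order_D by (rule image_mset_of_real_subseteq_proots)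
  moreover have "size (image_mset of_real D) = size (proots (pderiv F))"
  proof -
    have "mset_set (x ` I) \<subseteq># Z" using mset_set_set_mset_msubset[of Z] fin by (simp add: Z_def)
    then have "size D = size Z - size (mset_set (x ` I)) + length cs"
      unfolding D_def by (simp only: size_union size_Diff_submset size_mset)
    also have "\<dots> = card I - card (x ` I) + (card (x ` I) - 1)"
      using cs(3) fin by (simp add: Z_def)
    also have "\<dots> = card I - 1"
      using fin ne card_image_le[OF fin, of x] card_gt_0_iff[of "x ` I"] by simp
    finally show ?thesis
      by (simp add: F_def size_proots_complex degree_pderiv degree_root_poly)
  qed
  ultimately have "image_mset of_real D = proots (pderiv F)"
    by (metis mset_subset_size subset_mset.le_neq_trans less_irrefl)
  then show ?thesis by (simp add: F_def D_def Z_def)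
qed

lemma critical_points_root_poly:
  fixes x :: "'i \<Rightarrow> real"
  assumes "finite I" "I \<noteq> {}"
  obtains cs where "interlaced (sorted_list_of_set (x ` I)) cs" "\<forall>c\<in>set cs. log_deriv I x c = 0"
    "proots (pderiv (root_poly I (\<lambda>i. complex_of_real (x i))))
     = image_mset of_real (image_mset x (mset_set I) - mset_set (x ` I) + mset cs)"
proof -
  define rs where "rs = sorted_list_of_set (x ` I)"
  have rs: "sorted_wrt (<) rs" "set rs = x ` I" "length rs = card (x ` I)" "rs \<noteq> []"
    using assms by (simp_all add: rs_def)
  have "\<forall>j. \<exists>t. Suc j < length rs \<longrightarrow> rs ! j < t \<and> t < rs ! Suc j \<and> poly (pderiv (root_poly I x)) t = 0"
  proof
    fix j
    show "\<exists>t. Suc j < length rs \<longrightarrow> rs ! j < t \<and> t < rs ! Suc j \<and> poly (pderiv (root_poly I x)) t = 0"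
    proof (cases "Suc j < length rs")
      case True
      then have "rs ! j \<in> x ` I" "rs ! Suc j \<in> x ` I" "rs ! j < rs ! Suc j"
        using rs(1,2) by (auto simp: sorted_wrt_nth_less)
      then show ?thesis using rolle_root_poly[OF assms(1)] by metis
    qed simp
  qed
  then obtain s where s: "\<And>j. Suc j < length rs \<Longrightarrow> rs ! j < s j \<and> s j < rs ! Suc j \<and> poly (pderiv (root_poly I x)) (s j) = 0"
    by metis
  define cs where "cs = map s [0..<length rs - 1]"
  have il: "interlaced rs cs" unfolding cs_def using rs(4) s by (intro interlaced_nth) auto
  have disj: "set cs \<inter> x ` I = {}" using interlaced_disjoint[OF il] rs(2) by auto
  have zero: "\<forall>c\<in>set cs. poly (pderiv (root_poly I x)) c = 0" using s by (auto simp: cs_def)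
  then have "\<forall>c\<in>set cs. log_deriv I x c = 0"
    using disj poly_pderiv_root_poly_eq_0_iff[OF assms(1)] by blast
  moreover have "length cs = card (x ` I) - 1" using rs(3) by (simp add: cs_def)
  ultimately show ?thesis
    using that[of cs] il proots_pderiv_root_poly[OF assms interlaced_distinct[OF il] disj _ zero]
    by (simp add: rs_def)
qed

lemma abs_eq_same_sign_mult:
  fixes A :: "real set"
  assumes "(\<forall>u\<in>A. u \<le> 0) \<or> (\<forall>u\<in>A. 0 \<le> u)"
  obtains \<sigma> where "\<And>u. u \<in> A \<Longrightarrow> \<bar>u\<bar> = \<sigma> * u"
  using assms that[of "-1"] that[of 1] by force

(* The critical points share the sign of the roots, and by Vieta their sum is
   (card I - 1) / card I times the sum of the roots. *)
lemma sum_abs_roots_diff_critical_points: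
  fixes x :: "'i \<Rightarrow> real"
  assumes fin: "finite I" "I \<noteq> {}" and cs: "interlaced (sorted_list_of_set (x ` I)) cs"
    and crit: "proots (pderiv (root_poly I (\<lambda>i. complex_of_real (x i))))
               = image_mset of_real (image_mset x (mset_set I) - mset_set (x ` I) + mset cs)"
    and sign: "(\<forall>i\<in>I. x i \<le> 0) \<or> (\<forall>i\<in>I. 0 \<le> x i)"
  shows "(\<Sum>u\<in>x ` I. \<bar>u\<bar>) - sum_list (map abs cs) = (\<Sum>i\<in>I. \<bar>x i\<bar>) / card I"
proof -
  define R where "R = image_mset x (mset_set I) - mset_set (x ` I)"
  have "mset_set (x ` I) \<subseteq># image_mset x (mset_set I)"
    using mset_set_set_mset_msubset[of "image_mset x (mset_set I)"] fin by simp
  then have "image_mset x (mset_set I) = R + mset_set (x ` I)" by (simp add: R_def)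
  then have "sum_mset (image_mset x (mset_set I)) = sum_mset R + (\<Sum>u\<in>x ` I. u)"
    by (simp add: sum_unfold_sum_mset)
  then have roots: "(\<Sum>i\<in>I. x i) = sum_mset R + (\<Sum>u\<in>x ` I. u)"
    by (simp add: sum_unfold_sum_mset image_mset.compositionality comp_def)
  have crits: "sum_mset R + sum_list cs = (real (card I) - 1) / card I * (\<Sum>i\<in>I. x i)"
    using sum_critical_points_of_real[OF fin crit] by (simp add: R_def sum_mset_sum_list)
  have "(\<Sum>u\<in>x ` I. u) - sum_list cs = (\<Sum>i\<in>I. x i) - (real (card I) - 1) / card I * (\<Sum>i\<in>I. x i)"
    using roots crits by linarith
  also have "\<dots> = (\<Sum>i\<in>I. x i) / card I"
    using fin by (simp add: field_simps card_gt_0_iff)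
  finally have "(\<Sum>u\<in>x ` I. u) - sum_list cs = (\<Sum>i\<in>I. x i) / card I" .
  moreover have "(\<forall>u\<in>x ` I \<union> set cs. u \<le> 0) \<or> (\<forall>u\<in>x ` I \<union> set cs. 0 \<le> u)"
  proof -
    have "\<exists>a\<in>x ` I. a < c" "\<exists>b\<in>x ` I. c < b" if "c \<in> set cs" for c
      using interlaced_bounds[OF cs that] fin by auto
    with sign show ?thesis by (fastforce intro: less_imp_le)
  qed
  then obtain \<sigma> :: real where \<sigma>: "\<And>u. u \<in> x ` I \<union> set cs \<Longrightarrow> \<bar>u\<bar> = \<sigma> * u"
    using abs_eq_same_sign_mult by blast
  moreover have "(\<Sum>u\<in>x ` I. \<bar>u\<bar>) = \<sigma> * (\<Sum>u\<in>x ` I. u)"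
    using \<sigma> by (simp add: sum_distrib_left)
  moreover have "(\<Sum>i\<in>I. \<bar>x i\<bar>) = \<sigma> * (\<Sum>i\<in>I. x i)"
    using \<sigma> by (simp add: sum_distrib_left)
  moreover have "sum_list (map abs cs) = \<sigma> * sum_list cs"
  proof -
    have "sum_list (map abs cs) = (\<Sum>u\<leftarrow>cs. \<sigma> * u)"
      using \<sigma> by (intro arg_cong[where f = sum_list] map_cong) auto
    then show ?thesis by (simp add: sum_list_const_mult)
  qed
  ultimately show ?thesis by (simp add: right_diff_distrib[symmetric])
qed

section \<open>Matchings\<close>

lemma interlaced_matching:
  fixes rs cs :: "real list"
  assumes "interlaced rs cs"
  obtains M where "image_mset fst M = mset rs" "image_mset snd M = add_mset 0 (mset cs)"
    "(\<Sum>p\<in>#M. \<bar>fst p - snd p\<bar>) = sum_list (map abs rs) - sum_list (map abs cs)"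
proof -
  have "\<exists>M. image_mset fst M = mset rs \<and> image_mset snd M = add_mset 0 (mset cs) \<and>
          (\<Sum>p\<in>#M. \<bar>fst p - snd p\<bar>) = sum_list (map abs rs) - sum_list (map abs cs)"
    using assms
  proof (induction rs arbitrary: cs rule: measure_induct_rule[of length])
    case (less rs)
    from less.prems show ?case
    proof cases
      case (interlaced_single a)
      then show ?thesis by (intro exI[of _ "{#(a, 0)#}"]) simp
    next
      case (interlaced_Cons a c b rs' cs')
      (* c is paired with the endpoint of its gap on its own side of 0; the other endpoint
         stays in the list that is matched recursively. *)
      show ?thesis
      proof (cases "c < 0")
        case True
        from less.IH[of "b # rs'" cs'] interlaced_Cons(1,5) obtain M where
          "image_mset fst M = mset (b # rs')" "image_mset snd M = add_mset 0 (mset cs')"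
          "(\<Sum>p\<in>#M. \<bar>fst p - snd p\<bar>) = sum_list (map abs (b # rs')) - sum_list (map abs cs')"
          by auto
        moreover have "\<bar>a - c\<bar> = \<bar>a\<bar> - \<bar>c\<bar>" using interlaced_Cons True by simp
        ultimately show ?thesis using interlaced_Cons(1,2)
          by (intro exI[of _ "add_mset (a, c) M"]) (simp add: add_mset_commute)
      next
        case False
        from interlaced_Cons have "interlaced (a # rs') cs'" by (auto intro: interlaced_Cons_less)
        with less.IH[of "a # rs'" cs'] interlaced_Cons(1) obtain M where
          "image_mset fst M = mset (a # rs')" "image_mset snd M = add_mset 0 (mset cs')"
          "(\<Sum>p\<in>#M. \<bar>fst p - snd p\<bar>) = sum_list (map abs (a # rs')) - sum_list (map abs cs')"
          by auto
        moreover have "\<bar>b - c\<bar> = \<bar>b\<bar> - \<bar>c\<bar>" using interlaced_Cons False by simp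
        ultimately show ?thesis using interlaced_Cons(1,2)
          by (intro exI[of _ "add_mset (b, c) M"]) (simp add: add_mset_commute)
      qed
    qed
  qed
  with that show ?thesis by blast
qed

lemma permutation_of_matching:
  assumes "mset us = mset (map fst ps)" "mset vs = mset (map snd ps)"
  obtains \<pi> where "\<pi> permutes {..<length ps}"
    "(\<Sum>i<length ps. f (us ! i) (vs ! \<pi> i)) = (\<Sum>p\<leftarrow>ps. f (fst p) (snd p))"
proof -
  define N where "N = length ps"
  obtain \<sigma> where \<sigma>: "\<sigma> permutes {..<length (map fst ps)}" "permute_list \<sigma> (map fst ps) = us"
    using mset_eq_permutation[OF assms(1)] by blast
  obtain \<tau> where \<tau>: "\<tau> permutes {..<length (map snd ps)}" "permute_list \<tau> (map snd ps) = vs"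
    using mset_eq_permutation[OF assms(2)] by blast
  have \<sigma>N: "\<sigma> permutes {..<N}" and \<tau>N: "\<tau> permutes {..<N}" using \<sigma>(1) \<tau>(1) by (simp_all add: N_def)
  define \<pi> where "\<pi> = inv \<tau> \<circ> \<sigma>"
  have \<pi>: "\<pi> permutes {..<N}" unfolding \<pi>_def by (rule permutes_compose[OF \<sigma>N permutes_inv[OF \<tau>N]])
  have matched: "f (us ! i) (vs ! \<pi> i) = f (fst (ps ! \<sigma> i)) (snd (ps ! \<sigma> i))" if i: "i < N" for i
  proof -
    have "\<sigma> i < N" "\<pi> i < N" using permutes_in_image[OF \<sigma>N] permutes_in_image[OF \<pi>] i by auto
    have "us ! i = fst (ps ! \<sigma> i)"
      using \<sigma>(2)[symmetric] permute_list_nth[OF \<sigma>(1)] i \<open>\<sigma> i < N\<close> by (auto simp: N_def)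
    moreover have "vs ! \<pi> i = map snd ps ! \<tau> (\<pi> i)"
      using \<tau>(2)[symmetric] permute_list_nth[OF \<tau>(1)] \<open>\<pi> i < N\<close> by (auto simp: N_def)
    moreover have "\<tau> (\<pi> i) = \<sigma> i" unfolding \<pi>_def using permutes_inverses(1)[OF \<tau>N] by simp
    ultimately show ?thesis using \<open>\<sigma> i < N\<close> by (simp add: N_def)
  qed
  have "(\<Sum>i<N. f (us ! i) (vs ! \<pi> i)) = (\<Sum>i<N. f (fst (ps ! \<sigma> i)) (snd (ps ! \<sigma> i)))"
    using matched by simp
  also have "\<dots> = (\<Sum>i<N. f (fst (ps ! i)) (snd (ps ! i)))"
    using sum.permute[OF \<sigma>N, of "\<lambda>i. f (fst (ps ! i)) (snd (ps ! i))"] by (simp add: comp_def)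
  also have "\<dots> = (\<Sum>p\<leftarrow>ps. f (fst p) (snd p))"
    by (simp add: sum_list_sum_nth atLeast0LessThan N_def)
  finally show ?thesis using that \<pi> by (simp add: N_def)
qed

lemma d1_le_matching_cost:
  fixes M :: "(complex \<times> complex) multiset"
  assumes "image_mset fst M = U" "image_mset snd M = V"
  shows "d1 U V \<le> (\<Sum>p\<in>#M. cmod (fst p - snd p))"
proof -
  obtain ps where ps: "mset ps = M" using ex_mset by blast
  define us where "us = (SOME l. mset l = U)"
  define vs where "vs = (SOME l. mset l = V)"
  have "mset us = U" unfolding us_def by (rule someI_ex) (rule ex_mset)
  then have us: "mset us = mset (map fst ps)" using assms(1) ps by simp
  have "mset vs = V" unfolding vs_def by (rule someI_ex) (rule ex_mset)
  then have vs: "mset vs = mset (map snd ps)" using assms(2) ps by simp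
  obtain \<pi> where \<pi>: "\<pi> permutes {..<length ps}"
    "(\<Sum>i<length ps. cmod (us ! i - vs ! \<pi> i)) = (\<Sum>p\<leftarrow>ps. cmod (fst p - snd p))"
    using permutation_of_matching[OF us vs, where f = "\<lambda>u v. cmod (u - v)"] by blast
  have size_U: "size U = length ps" using assms(1) ps by (metis size_image_mset size_mset)
  have "d1 U V = Min ((\<lambda>\<pi>. \<Sum>i<length ps. cmod (us ! i - vs ! \<pi> i)) ` {\<pi>. \<pi> permutes {..<length ps}})"
    unfolding d1_def us_def vs_def size_U Let_def by simp
  also have "\<dots> \<le> (\<Sum>i<length ps. cmod (us ! i - vs ! \<pi> i))"
    by (rule Min_le) (auto intro: finite_permutations simp: \<pi>(1))
  also have "\<dots> = (\<Sum>p\<leftarrow>ps. cmod (fst p - snd p))" by (rule \<pi>(2))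
  also have "\<dots> = (\<Sum>p\<in>#M. cmod (fst p - snd p))"
    unfolding ps[symmetric] by (induction ps) simp_all
  finally show ?thesis .
qed

lemma d1_proots_pderiv_le:
  fixes x :: "'i \<Rightarrow> real"
  assumes fin: "finite I" and cs: "interlaced (sorted_list_of_set (x ` I)) cs"
    and crit: "proots (pderiv (root_poly I (\<lambda>i. complex_of_real (x i))))
               = image_mset of_real (image_mset x (mset_set I) - mset_set (x ` I) + mset cs)"
  shows "d1 (proots (root_poly I (\<lambda>i. complex_of_real (x i))))
            (proots (pderiv (root_poly I (\<lambda>i. complex_of_real (x i)))) + {#0#})
         \<le> (\<Sum>u\<in>x ` I. \<bar>u\<bar>) - sum_list (map abs cs)"
proof -
  define rs where "rs = sorted_list_of_set (x ` I)"
  define R where "R = image_mset x (mset_set I) - mset_set (x ` I)"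
  have rs: "mset rs = mset_set (x ` I)" "distinct rs" "set rs = x ` I"
    using fin mset_set_set[of rs] by (simp_all add: rs_def)
  have "mset_set (x ` I) \<subseteq># image_mset x (mset_set I)"
    using mset_set_set_mset_msubset[of "image_mset x (mset_set I)"] fin by simp
  then have Z: "image_mset x (mset_set I) = mset rs + R"
    by (simp add: R_def rs(1))
  obtain M where M: "image_mset fst M = mset rs" "image_mset snd M = add_mset 0 (mset cs)"
    "(\<Sum>p\<in>#M. \<bar>fst p - snd p\<bar>) = sum_list (map abs rs) - sum_list (map abs cs)"
    using interlaced_matching cs unfolding rs_def by blast
  define N :: "(complex \<times> complex) multiset"
    where "N = image_mset (map_prod of_real of_real) (M + image_mset (\<lambda>u. (u, u)) R)"
  have M_of_real: "image_mset (\<lambda>p. complex_of_real (fst p)) M = image_mset of_real (mset rs)"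
    "image_mset (\<lambda>p. complex_of_real (snd p)) M = add_mset 0 (image_mset of_real (mset cs))"
    using arg_cong[OF M(1), of "image_mset complex_of_real"] arg_cong[OF M(2), of "image_mset complex_of_real"]
    by (simp_all add: image_mset.compositionality comp_def)
  have "image_mset fst N = image_mset of_real (image_mset x (mset_set I))"
    by (simp add: N_def Z M_of_real image_mset.compositionality comp_def)
  also have "\<dots> = proots (root_poly I (\<lambda>i. complex_of_real (x i)))"
    using fin by (simp add: proots_root_poly image_mset.compositionality comp_def)
  finally have fst_N: "image_mset fst N = proots (root_poly I (\<lambda>i. complex_of_real (x i)))" .
  have snd_N: "image_mset snd N = proots (pderiv (root_poly I (\<lambda>i. complex_of_real (x i)))) + {#0#}"
    by (simp add: N_def crit R_def M_of_real image_mset.compositionality comp_def)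
  have "(\<Sum>p\<in>#N. cmod (fst p - snd p)) = (\<Sum>p\<in>#M. \<bar>fst p - snd p\<bar>)"
    by (simp add: N_def image_mset.compositionality comp_def flip: of_real_diff)
  also have "\<dots> = (\<Sum>u\<in>x ` I. \<bar>u\<bar>) - sum_list (map abs cs)"
    using M(3) rs(2,3) sum_list_distinct_conv_sum_set[of rs abs] by simp
  finally show ?thesis using d1_le_matching_cost[OF fst_N snd_N] by simp
qed

section \<open>Roots of both signs\<close>

lemma sum_abs_critical_points_left_le:
  fixes x :: "'i \<Rightarrow> real"
  assumes fin: "finite J" "finite K" "K \<noteq> {}" and sign: "\<forall>i\<in>J. x i < 0" "\<forall>i\<in>K. 0 \<le> x i"
    and cs: "interlaced (sorted_list_of_set (x ` J)) cs" "\<forall>c\<in>set cs. log_deriv (J \<union> K) x c = 0"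
    and ds: "interlaced (sorted_list_of_set (x ` J)) ds" "\<forall>d\<in>set ds. log_deriv J x d = 0"
  shows "sum_list (map abs ds) \<le> sum_list (map abs cs)"
proof -
  have "list_all2 (\<lambda>c d. \<bar>d\<bar> \<le> \<bar>c\<bar>) cs ds"
  proof (rule interlaced_list_all2[OF cs(1) ds(1)])
    fix a b c d
    assume ab: "a \<in> set (sorted_list_of_set (x ` J))" "b \<in> set (sorted_list_of_set (x ` J))"
      "set (sorted_list_of_set (x ` J)) \<inter> {a<..<b} = {}"
      and cd: "c \<in> set cs" "d \<in> set ds" "a < c" "c < b" "a < d" "d < b"
    have "b < 0" using ab(2) sign(1) fin(1) by auto
    then have free: "\<forall>i\<in>J \<union> K. x i \<notin> {a<..<b}" using ab(3) sign(2) fin(1) by fastforce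
    have "J \<inter> K = {}" using sign by fastforce
    moreover have "\<forall>i\<in>K. b \<le> x i" using \<open>b < 0\<close> sign(2) by fastforce
    ultimately have "c < d"
      using critical_point_shift_left[OF fin(1-3) _ free, of c d] cs(2) ds(2) cd by simp
    then show "\<bar>d\<bar> \<le> \<bar>c\<bar>" using cd(6) \<open>b < 0\<close> by simp
  qed
  then show ?thesis by (induction rule: list_all2_induct) (simp_all add: add_mono)
qed

lemma sum_abs_critical_points_right_le:
  fixes x :: "'i \<Rightarrow> real"
  assumes fin: "finite J" "finite K" "K \<noteq> {}" and sign: "\<forall>i\<in>J. 0 \<le> x i" "\<forall>i\<in>K. x i < 0"
    and cs: "interlaced (sorted_list_of_set (x ` J)) cs" "\<forall>c\<in>set cs. log_deriv (J \<union> K) x c = 0"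
    and ds: "interlaced (sorted_list_of_set (x ` J)) ds" "\<forall>d\<in>set ds. log_deriv J x d = 0"
  shows "sum_list (map abs ds) \<le> sum_list (map abs cs)"
proof -
  have "list_all2 (\<lambda>c d. \<bar>d\<bar> \<le> \<bar>c\<bar>) cs ds"
  proof (rule interlaced_list_all2[OF cs(1) ds(1)])
    fix a b c d
    assume ab: "a \<in> set (sorted_list_of_set (x ` J))" "b \<in> set (sorted_list_of_set (x ` J))"
      "set (sorted_list_of_set (x ` J)) \<inter> {a<..<b} = {}"
      and cd: "c \<in> set cs" "d \<in> set ds" "a < c" "c < b" "a < d" "d < b"
    have "0 \<le> a" using ab(1) sign(1) fin(1) by auto
    then have free: "\<forall>i\<in>J \<union> K. x i \<notin> {a<..<b}" using ab(3) sign(2) fin(1) by fastforce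
    have "J \<inter> K = {}" using sign by fastforce
    moreover have "\<forall>i\<in>K. x i \<le> a" using \<open>0 \<le> a\<close> sign(2) by fastforce
    ultimately have "d < c"
      using critical_point_shift_right[OF fin(1-3) _ free, of c d] cs(2) ds(2) cd by simp
    then show "\<bar>d\<bar> \<le> \<bar>c\<bar>" using cd(5) \<open>0 \<le> a\<close> by simp
  qed
  then show ?thesis by (induction rule: list_all2_induct) (simp_all add: add_mono)
qed

lemma sum_abs_critical_points_sign_split:
  fixes x :: "'i \<Rightarrow> real"
  assumes fin: "finite J" "finite K" and ne: "J \<noteq> {}" "K \<noteq> {}"
    and sign: "\<forall>i\<in>J. x i < 0" "\<forall>i\<in>K. 0 \<le> x i"
    and cs: "interlaced (sorted_list_of_set (x ` (J \<union> K))) cs" "\<forall>c\<in>set cs. log_deriv (J \<union> K) x c = 0"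
    and csJ: "interlaced (sorted_list_of_set (x ` J)) csJ" "\<forall>c\<in>set csJ. log_deriv J x c = 0"
    and csK: "interlaced (sorted_list_of_set (x ` K)) csK" "\<forall>c\<in>set csK. log_deriv K x c = 0"
  shows "sum_list (map abs csJ) + sum_list (map abs csK) \<le> sum_list (map abs cs)"
proof -
  have "sorted_list_of_set (x ` (J \<union> K)) = sorted_list_of_set (x ` J) @ sorted_list_of_set (x ` K)"
    using fin sign by (fastforce simp: image_Un intro: sorted_list_of_set_Un_less)
  moreover have "sorted_list_of_set (x ` J) \<noteq> []" "sorted_list_of_set (x ` K) \<noteq> []"
    using fin ne by auto
  ultimately obtain cs1 c cs2 where split: "cs = cs1 @ c # cs2"
    "interlaced (sorted_list_of_set (x ` J)) cs1" "interlaced (sorted_list_of_set (x ` K)) cs2"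
    using interlaced_append cs(1) by metis
  have "sum_list (map abs csJ) \<le> sum_list (map abs cs1)"
    using sum_abs_critical_points_left_le[OF fin ne(2) sign split(2) _ csJ] cs(2) split(1) by simp
  moreover have "sum_list (map abs csK) \<le> sum_list (map abs cs2)"
    using sum_abs_critical_points_right_le[of K J x cs2 csK] fin ne sign split(3) csK cs(2) split(1)
    by (simp add: Un_commute)
  ultimately show ?thesis using split(1) by simp
qed

lemma d1_proots_pderiv_sign_split:
  fixes x :: "'i \<Rightarrow> real"
  assumes fin: "finite J" "finite K" and ne: "J \<noteq> {}" "K \<noteq> {}"
    and sign: "\<forall>i\<in>J. x i < 0" "\<forall>i\<in>K. 0 \<le> x i"
  defines "P \<equiv> root_poly (J \<union> K) (\<lambda>i. complex_of_real (x i))"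
  shows "d1 (proots P) (proots (pderiv P) + {#0#})
         \<le> (\<Sum>i\<in>J. \<bar>x i\<bar>) / card J + (\<Sum>i\<in>K. \<bar>x i\<bar>) / card K"
proof -
  have "finite (J \<union> K)" "J \<union> K \<noteq> {}" using fin ne by auto
  then obtain cs where cs: "interlaced (sorted_list_of_set (x ` (J \<union> K))) cs"
    "\<forall>c\<in>set cs. log_deriv (J \<union> K) x c = 0"
    "proots (pderiv P) = image_mset of_real (image_mset x (mset_set (J \<union> K)) - mset_set (x ` (J \<union> K)) + mset cs)"
    unfolding P_def by (rule critical_points_root_poly)
  obtain csJ where csJ: "interlaced (sorted_list_of_set (x ` J)) csJ" "\<forall>c\<in>set csJ. log_deriv J x c = 0"
    "proots (pderiv (root_poly J (\<lambda>i. complex_of_real (x i))))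
     = image_mset of_real (image_mset x (mset_set J) - mset_set (x ` J) + mset csJ)"
    using critical_points_root_poly[OF fin(1) ne(1)] by blast
  obtain csK where csK: "interlaced (sorted_list_of_set (x ` K)) csK" "\<forall>c\<in>set csK. log_deriv K x c = 0"
    "proots (pderiv (root_poly K (\<lambda>i. complex_of_real (x i))))
     = image_mset of_real (image_mset x (mset_set K) - mset_set (x ` K) + mset csK)"
    using critical_points_root_poly[OF fin(2) ne(2)] by blast
  have "d1 (proots P) (proots (pderiv P) + {#0#}) \<le> (\<Sum>u\<in>x ` (J \<union> K). \<bar>u\<bar>) - sum_list (map abs cs)"
    unfolding P_def using d1_proots_pderiv_le \<open>finite (J \<union> K)\<close> cs(1,3) P_def by blast
  moreover have "(\<Sum>u\<in>x ` (J \<union> K). \<bar>u\<bar>) = (\<Sum>u\<in>x ` J. \<bar>u\<bar>) + (\<Sum>u\<in>x ` K. \<bar>u\<bar>)"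
    using fin sign by (subst image_Un, intro sum.union_disjoint) fastforce+
  moreover have "sum_list (map abs csJ) + sum_list (map abs csK) \<le> sum_list (map abs cs)"
    using sum_abs_critical_points_sign_split[OF fin ne sign cs(1,2) csJ(1,2) csK(1,2)] .
  moreover have "(\<Sum>u\<in>x ` J. \<bar>u\<bar>) - sum_list (map abs csJ) = (\<Sum>i\<in>J. \<bar>x i\<bar>) / card J"
    using sum_abs_roots_diff_critical_points[OF fin(1) ne(1) csJ(1,3)] sign(1) by fastforce
  moreover have "(\<Sum>u\<in>x ` K. \<bar>u\<bar>) - sum_list (map abs csK) = (\<Sum>i\<in>K. \<bar>x i\<bar>) / card K"
    using sum_abs_roots_diff_critical_points[OF fin(2) ne(2) csK(1,3)] sign(2) by blast
  ultimately show ?thesis by linarith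
qed

theorem mainTheorem14:
  fixes n k :: nat and x :: "nat \<Rightarrow> real"
  assumes "1 \<le> k" and "k < n"
    and "\<forall>i\<in>{1..k}. x i < 0"
    and "\<forall>i\<in>{k+1..n}. x i \<ge> 0"
  shows "d1 (proots (Pn n x)) (proots (pderiv (Pn n x)) + {#0#})
         \<le> (1 / real k) * (\<Sum>i=1..k. \<bar>x i\<bar>) + (1 / real (n - k)) * (\<Sum>i=k+1..n. \<bar>x i\<bar>)"
proof -
  have "{1..n} = {1..k} \<union> {k+1..n}" using assms(2) by auto
  then have "Pn n x = root_poly ({1..k} \<union> {k+1..n}) (\<lambda>i. complex_of_real (x i))"
    by (simp add: Pn_eq_root_poly)
  moreover have "{1..k} \<noteq> {}" "{k+1..n} \<noteq> {}" using assms(1,2) by auto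
  ultimately show ?thesis
    using d1_proots_pderiv_sign_split[of "{1..k}" "{k+1..n}" x] assms(3,4) by simp
qed

end
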